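(* Let $\mathcal{C}$ be an additive category and $n\geq 1$ an integer. Suppose given a commutative diagram in $\mathcal{C}$ $$\begin{array}{ccccccccccc} A_0 & \xrightarrow{f_0} & A_1 & \xrightarrow{f_1} & A_2 & \xrightarrow{f_2} & \cdots & \xrightarrow{f_{n-1}} & A_n & \xrightarrow{f_n} & A_{n+1}\\ \| & & \downarrow{\scriptstyle h_1} & & \downarrow{\scriptstyle h_2} & & & & \downarrow{\scriptstyle h_n} & & \downarrow{\scriptstyle h_{n+1}}\\ A_0 & \xrightarrow{g_0} & B_1 & \xrightarrow{g_1} & B_2 & \xrightarrow{g_2} & \cdots & \xrightarrow{g_{n-1}} & B_n & \xrightarrow{g_n} & B_{n+1} \end{array}$$ (the leftmost vertical map is $1_{A_0}$, and all squares commute: $g_0=h_1f_0$ and $h_{i+1}f_i=g_ih_i$ for $1\le i\le n$) whose two rows are right $n$-exact sequences. Then the sequence $$A_1\xrightarrow{d_0} A_2\oplus B_1\xrightarrow{d_1} A_3\oplus B_2\xrightarrow{d_2}\cdots\xrightarrow{d_{n-1}}A_{n+1}\oplus B_{n}\xrightarrow{d_{n}}B_{n+1}$$ is right $n$-exact, where $d_0=\begin{pmatrix}-f_1\\ h_1\end{pmatrix}$, $d_i=\begin{pmatrix}-f_{i+1} & 0\\ h_{i+1} & g_i\end{pmatrix}$ for $i=1,\dots,n-1$, and $d_n=(h_{n+1}\ \ g_n)$. (In other words, the diagram obtained by deleting the first column is an $n$-pushout diagram.)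
   Context: Let $f:A\to B$ be a morphism in an additive category. A weak cokernel of $f$ is a morphism $g:B\to C$ with $gf=0$ such that for every $h:B\to D$ with $hf=0$ there exists a (not necessarily unique) $k:C\to D$ with $h=kg$. For a positive integer $n$, a sequence $A_0\xrightarrow{f_0}A_1\xrightarrow{f_1}\cdots\xrightarrow{f_n}A_{n+1}$ is called right $n$-exact (and $(f_1,\dots,f_n)$ is called an $n$-cokernel of $f_0$) if for each $k=1,\dots,n-1$ the morphism $f_k$ is a weak cokernel of $f_{k-1}$, and $f_n$ is a cokernel of $f_{n-1}$. *)

theory Defs
  imports Main
begin

record ('o, 'm) cat =
  Obj  :: "'o set"
  Mor  :: "'m set"
  Dom  :: "'m \<Rightarrow> 'o"
  Cod  :: "'m \<Rightarrow> 'o"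
  Comp :: "'m \<Rightarrow> 'm \<Rightarrow> 'm"      \<comment> \<open>Comp C g f = g after f\<close>
  Id   :: "'o \<Rightarrow> 'm"
  Plus :: "'m \<Rightarrow> 'm \<Rightarrow> 'm"
  Neg  :: "'m \<Rightarrow> 'm"
  Zero :: "'o \<Rightarrow> 'o \<Rightarrow> 'm"      \<comment> \<open>zero morphism a \<rightarrow> b\<close>

definition Hom :: "('o, 'm, 'x) cat_scheme \<Rightarrow> 'o \<Rightarrow> 'o \<Rightarrow> 'm set" where
  "Hom C a b = {f \<in> Mor C. Dom C f = a \<and> Cod C f = b}"

definition is_biproduct ::
  "('o, 'm, 'x) cat_scheme \<Rightarrow> 'o \<Rightarrow> 'o \<Rightarrow> 'o \<Rightarrow> 'm \<Rightarrow> 'm \<Rightarrow> 'm \<Rightarrow> 'm \<Rightarrow> bool" where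
  "is_biproduct C a b s p1 p2 i1 i2 \<longleftrightarrow>
     s \<in> Obj C \<and>
     p1 \<in> Hom C s a \<and> p2 \<in> Hom C s b \<and> i1 \<in> Hom C a s \<and> i2 \<in> Hom C b s \<and>
     Comp C p1 i1 = Id C a \<and> Comp C p2 i2 = Id C b \<and>
     Comp C p1 i2 = Zero C b a \<and> Comp C p2 i1 = Zero C a b \<and>
     Plus C (Comp C i1 p1) (Comp C i2 p2) = Id C s"

definition additive_category :: "('o, 'm, 'x) cat_scheme \<Rightarrow> bool" where
  "additive_category C \<longleftrightarrow>
     \<comment> \<open>category axioms\<close>
     (\<forall>f \<in> Mor C. Dom C f \<in> Obj C \<and> Cod C f \<in> Obj C) \<and>
     (\<forall>a \<in> Obj C. Id C a \<in> Hom C a a) \<and>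
     (\<forall>a \<in> Obj C. \<forall>b \<in> Obj C. \<forall>c \<in> Obj C. \<forall>f \<in> Hom C a b. \<forall>g \<in> Hom C b c.
        Comp C g f \<in> Hom C a c) \<and>
     (\<forall>a \<in> Obj C. \<forall>b \<in> Obj C. \<forall>f \<in> Hom C a b.
        Comp C (Id C b) f = f \<and> Comp C f (Id C a) = f) \<and>
     (\<forall>a \<in> Obj C. \<forall>b \<in> Obj C. \<forall>c \<in> Obj C. \<forall>d \<in> Obj C.
        \<forall>f \<in> Hom C a b. \<forall>g \<in> Hom C b c. \<forall>h \<in> Hom C c d.
        Comp C h (Comp C g f) = Comp C (Comp C h g) f) \<and>
     \<comment> \<open>each hom-set is an abelian group\<close>
     (\<forall>a \<in> Obj C. \<forall>b \<in> Obj C.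
        Zero C a b \<in> Hom C a b \<and>
        (\<forall>f \<in> Hom C a b. \<forall>g \<in> Hom C a b. Plus C f g \<in> Hom C a b) \<and>
        (\<forall>f \<in> Hom C a b. Neg C f \<in> Hom C a b) \<and>
        (\<forall>f \<in> Hom C a b. \<forall>g \<in> Hom C a b. \<forall>h \<in> Hom C a b.
           Plus C (Plus C f g) h = Plus C f (Plus C g h)) \<and>
        (\<forall>f \<in> Hom C a b. \<forall>g \<in> Hom C a b. Plus C f g = Plus C g f) \<and>
        (\<forall>f \<in> Hom C a b. Plus C f (Zero C a b) = f) \<and>
        (\<forall>f \<in> Hom C a b. Plus C f (Neg C f) = Zero C a b)) \<and>
     \<comment> \<open>composition is bilinear\<close>
     (\<forall>a \<in> Obj C. \<forall>b \<in> Obj C. \<forall>c \<in> Obj C.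
        (\<forall>f \<in> Hom C a b. \<forall>g \<in> Hom C b c. \<forall>g' \<in> Hom C b c.
           Comp C (Plus C g g') f = Plus C (Comp C g f) (Comp C g' f)) \<and>
        (\<forall>f \<in> Hom C a b. \<forall>f' \<in> Hom C a b. \<forall>g \<in> Hom C b c.
           Comp C g (Plus C f f') = Plus C (Comp C g f) (Comp C g f'))) \<and>
     \<comment> \<open>zero object\<close>
     (\<exists>z \<in> Obj C. \<forall>a \<in> Obj C. Hom C z a = {Zero C z a} \<and> Hom C a z = {Zero C a z}) \<and>
     \<comment> \<open>binary biproducts\<close>
     (\<forall>a \<in> Obj C. \<forall>b \<in> Obj C. \<exists>s p1 p2 i1 i2. is_biproduct C a b s p1 p2 i1 i2)"

definition weak_cokernel :: "('o, 'm, 'x) cat_scheme \<Rightarrow> 'm \<Rightarrow> 'm \<Rightarrow> bool" where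
  "weak_cokernel C f g \<longleftrightarrow>
     f \<in> Mor C \<and> g \<in> Mor C \<and> Dom C g = Cod C f \<and>
     Comp C g f = Zero C (Dom C f) (Cod C g) \<and>
     (\<forall>D \<in> Obj C. \<forall>h \<in> Hom C (Cod C f) D. Comp C h f = Zero C (Dom C f) D \<longrightarrow>
        (\<exists>k \<in> Hom C (Cod C g) D. h = Comp C k g))"

definition cokernel :: "('o, 'm, 'x) cat_scheme \<Rightarrow> 'm \<Rightarrow> 'm \<Rightarrow> bool" where
  "cokernel C f g \<longleftrightarrow>
     f \<in> Mor C \<and> g \<in> Mor C \<and> Dom C g = Cod C f \<and>
     Comp C g f = Zero C (Dom C f) (Cod C g) \<and>
     (\<forall>D \<in> Obj C. \<forall>h \<in> Hom C (Cod C f) D. Comp C h f = Zero C (Dom C f) D \<longrightarrow>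
        (\<exists>!k. k \<in> Hom C (Cod C g) D \<and> h = Comp C k g))"

definition right_n_exact ::
  "('o, 'm, 'x) cat_scheme \<Rightarrow> nat \<Rightarrow> (nat \<Rightarrow> 'o) \<Rightarrow> (nat \<Rightarrow> 'm) \<Rightarrow> bool" where
  "right_n_exact C n X u \<longleftrightarrow>
     1 \<le> n \<and>
     (\<forall>k \<le> Suc n. X k \<in> Obj C) \<and>
     (\<forall>k \<le> n. u k \<in> Hom C (X k) (X (Suc k))) \<and>
     (\<forall>k. 1 \<le> k \<and> k < n \<longrightarrow> weak_cokernel C (u (k - 1)) (u k)) \<and>
     cokernel C (u (n - 1)) (u n)"

end

theory Submission
  imports Defs
begin

text \<open>The sequence is the mapping cone of the morphism of rows \<open>h\<close>. A map out of
  \<open>A (k+1) \<oplus> B k\<close> is a pair \<open>(a, b)\<close>, and it kills the previous differential exactly when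
  \<open>b \<circ> h k = a \<circ> f k\<close> and \<open>b \<circ> g (k-1) = 0\<close>. The bottom row then gives \<open>b = e \<circ> g k\<close>; now
  \<open>a - e \<circ> h (k+1)\<close> vanishes on \<open>f k\<close>, so the top row gives \<open>a - e \<circ> h (k+1) = c \<circ> f (k+1)\<close>,
  and \<open>(-c, e)\<close> is the required factorisation through the next differential. At the last step
  \<open>f n\<close> is epic, so already \<open>a = e \<circ> h (n+1)\<close>; uniqueness holds because \<open>g n\<close> is epic.\<close>

lemma cokernel_imp_weak_cokernel: "cokernel C f g \<Longrightarrow> weak_cokernel C f g"
  unfolding cokernel_def weak_cokernel_def by blast

lemma weak_cokernel_comp_zero:
  "weak_cokernel C f g \<Longrightarrow> Comp C g f = Zero C (Dom C f) (Cod C g)"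
  unfolding weak_cokernel_def by blast

lemma weak_cokernel_factor:
  "weak_cokernel C f g \<Longrightarrow> D \<in> Obj C \<Longrightarrow> y \<in> Hom C (Cod C f) D \<Longrightarrow>
   Comp C y f = Zero C (Dom C f) D \<Longrightarrow> \<exists>e \<in> Hom C (Cod C g) D. y = Comp C e g"
  unfolding weak_cokernel_def by blast

lemma weak_cokernel_epi_imp_cokernel:
  assumes wc: "weak_cokernel C f g"
    and epi: "\<And>D x y. x \<in> Hom C (Cod C g) D \<Longrightarrow> y \<in> Hom C (Cod C g) D \<Longrightarrow>
                 Comp C x g = Comp C y g \<Longrightarrow> x = y"
  shows "cokernel C f g"
  unfolding cokernel_def
proof (intro conjI ballI impI)
  show "f \<in> Mor C" "g \<in> Mor C" "Dom C g = Cod C f" "Comp C g f = Zero C (Dom C f) (Cod C g)"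
    using wc unfolding weak_cokernel_def by blast+
  fix D y
  assume "D \<in> Obj C" "y \<in> Hom C (Cod C f) D" "Comp C y f = Zero C (Dom C f) D"
  then obtain e where "e \<in> Hom C (Cod C g) D" "y = Comp C e g"
    using weak_cokernel_factor[OF wc] by blast
  then show "\<exists>!e. e \<in> Hom C (Cod C g) D \<and> y = Comp C e g"
    using epi by blast
qed

lemma one_or_Suc_cases:
  assumes "1 \<le> k" "k \<le> n"
  obtains "k = 1" | j where "1 \<le> j" "j < n" "k = Suc j"
  using assms by (cases k) (auto simp: Suc_le_eq)

lemma right_n_exact_obj: "right_n_exact C n X u \<Longrightarrow> k \<le> Suc n \<Longrightarrow> X k \<in> Obj C"
  unfolding right_n_exact_def by blast

lemma right_n_exact_hom: "right_n_exact C n X u \<Longrightarrow> k \<le> n \<Longrightarrow> u k \<in> Hom C (X k) (X (Suc k))"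
  unfolding right_n_exact_def by blast

lemma right_n_exact_hom_pred:
  assumes "right_n_exact C n X u" "1 \<le> k" "k \<le> n"
  shows "u (k - 1) \<in> Hom C (X (k - 1)) (X k)"
  using right_n_exact_hom[OF assms(1), of "k - 1"] assms(2,3) by simp

lemma right_n_exact_weak_cokernel:
  assumes "right_n_exact C n X u" "1 \<le> k" "k \<le> n"
  shows "weak_cokernel C (u (k - 1)) (u k)"
proof (cases "k = n")
  case True
  from assms(1) have "cokernel C (u (n - 1)) (u n)"
    unfolding right_n_exact_def by blast
  with True show ?thesis
    by (simp add: cokernel_imp_weak_cokernel)
next
  case False
  from assms(1) have "\<forall>k. 1 \<le> k \<and> k < n \<longrightarrow> weak_cokernel C (u (k - 1)) (u k)"
    unfolding right_n_exact_def by blast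
  with False assms(2,3) show ?thesis
    by simp
qed

lemma right_n_exact_comp_zero:
  assumes "right_n_exact C n X u" "1 \<le> k" "k \<le> n"
  shows "Comp C (u k) (u (k - 1)) = Zero C (X (k - 1)) (X (Suc k))"
  using weak_cokernel_comp_zero[OF right_n_exact_weak_cokernel[OF assms]]
    right_n_exact_hom_pred[OF assms] right_n_exact_hom[OF assms(1,3)]
  unfolding Hom_def by simp

lemma right_n_exactI:
  assumes "1 \<le> n" "\<And>k. k \<le> Suc n \<Longrightarrow> X k \<in> Obj C"
    and "\<And>k. k \<le> n \<Longrightarrow> u k \<in> Hom C (X k) (X (Suc k))"
    and "\<And>k. 1 \<le> k \<Longrightarrow> k \<le> n \<Longrightarrow> weak_cokernel C (u (k - 1)) (u k)"
    and "\<And>D x y. x \<in> Hom C (X (Suc n)) D \<Longrightarrow> y \<in> Hom C (X (Suc n)) D \<Longrightarrow>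
           Comp C x (u n) = Comp C y (u n) \<Longrightarrow> x = y"
  shows "right_n_exact C n X u"
proof -
  have cod: "Cod C (u n) = X (Suc n)"
    using assms(3) unfolding Hom_def by blast
  have "cokernel C (u (n - 1)) (u n)"
  proof (rule weak_cokernel_epi_imp_cokernel)
    show "weak_cokernel C (u (n - 1)) (u n)"
      using assms(1,4) by simp
    show "x = y" if "x \<in> Hom C (Cod C (u n)) D" "y \<in> Hom C (Cod C (u n)) D"
      and "Comp C x (u n) = Comp C y (u n)" for D x y
      using that unfolding cod by (rule assms(5))
  qed
  then show ?thesis
    unfolding right_n_exact_def using assms(1-3) assms(4)[OF _ less_imp_le] by blast
qed

locale additive_cat =
  fixes C :: "('o, 'm, 'x) cat_scheme"
  assumes additive: "additive_category C"
begin

lemma hom_objs: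
  assumes "f \<in> Hom C a b" shows "a \<in> Obj C" "b \<in> Obj C"
  using assms additive unfolding additive_category_def Hom_def by auto

lemma id_hom: "a \<in> Obj C \<Longrightarrow> cat.Id C a \<in> Hom C a a"
  using additive unfolding additive_category_def by meson

lemma comp_hom: "f \<in> Hom C a b \<Longrightarrow> g \<in> Hom C b c \<Longrightarrow> Comp C g f \<in> Hom C a c"
  using additive hom_objs unfolding additive_category_def by meson

lemma comp_id_left: "f \<in> Hom C a b \<Longrightarrow> Comp C (cat.Id C b) f = f"
  using additive hom_objs unfolding additive_category_def by meson

lemma comp_id_right: "f \<in> Hom C a b \<Longrightarrow> Comp C f (cat.Id C a) = f"
  using additive hom_objs unfolding additive_category_def by meson

lemma comp_assoc:
  "f \<in> Hom C a b \<Longrightarrow> g \<in> Hom C b c \<Longrightarrow> k \<in> Hom C c d \<Longrightarrow>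
   Comp C k (Comp C g f) = Comp C (Comp C k g) f"
  using additive hom_objs unfolding additive_category_def by meson

lemma zero_hom: "a \<in> Obj C \<Longrightarrow> b \<in> Obj C \<Longrightarrow> Zero C a b \<in> Hom C a b"
  using additive unfolding additive_category_def by blast

lemma plus_hom: "f \<in> Hom C a b \<Longrightarrow> g \<in> Hom C a b \<Longrightarrow> Plus C f g \<in> Hom C a b"
  using additive hom_objs unfolding additive_category_def by meson

lemma neg_hom: "f \<in> Hom C a b \<Longrightarrow> Neg C f \<in> Hom C a b"
  using additive hom_objs unfolding additive_category_def by meson

lemma plus_assoc:
  "f \<in> Hom C a b \<Longrightarrow> g \<in> Hom C a b \<Longrightarrow> h \<in> Hom C a b \<Longrightarrow>
   Plus C (Plus C f g) h = Plus C f (Plus C g h)"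
  using additive hom_objs unfolding additive_category_def by meson

lemma plus_commute: "f \<in> Hom C a b \<Longrightarrow> g \<in> Hom C a b \<Longrightarrow> Plus C f g = Plus C g f"
  using additive hom_objs unfolding additive_category_def by meson

lemma plus_zero_right: "f \<in> Hom C a b \<Longrightarrow> Plus C f (Zero C a b) = f"
  using additive hom_objs unfolding additive_category_def by meson

lemma plus_neg_right: "f \<in> Hom C a b \<Longrightarrow> Plus C f (Neg C f) = Zero C a b"
  using additive hom_objs unfolding additive_category_def by meson

lemma comp_plus_left:
  "f \<in> Hom C a b \<Longrightarrow> g \<in> Hom C b c \<Longrightarrow> g' \<in> Hom C b c \<Longrightarrow>
   Comp C (Plus C g g') f = Plus C (Comp C g f) (Comp C g' f)"
  using additive hom_objs unfolding additive_category_def by meson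

lemma comp_plus_right:
  "f \<in> Hom C a b \<Longrightarrow> f' \<in> Hom C a b \<Longrightarrow> g \<in> Hom C b c \<Longrightarrow>
   Comp C g (Plus C f f') = Plus C (Comp C g f) (Comp C g f')"
  using additive hom_objs unfolding additive_category_def by meson

lemma plus_zero_left: "f \<in> Hom C a b \<Longrightarrow> Plus C (Zero C a b) f = f"
  by (metis hom_objs plus_commute plus_zero_right zero_hom)

lemma plus_neg_left: "f \<in> Hom C a b \<Longrightarrow> Plus C (Neg C f) f = Zero C a b"
  by (metis neg_hom plus_commute plus_neg_right)

lemma neg_unique:
  assumes "x \<in> Hom C a b" "y \<in> Hom C a b" "Plus C x y = Zero C a b"
  shows "y = Neg C x"
  by (metis assms neg_hom plus_assoc plus_neg_left plus_zero_left plus_zero_right)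

lemma neg_neg: "x \<in> Hom C a b \<Longrightarrow> Neg C (Neg C x) = x"
  by (metis neg_hom neg_unique plus_neg_left)

lemma plus_neg_cancel: "x \<in> Hom C a b \<Longrightarrow> y \<in> Hom C a b \<Longrightarrow> Plus C (Plus C x (Neg C y)) y = x"
  by (metis neg_hom plus_assoc plus_neg_left plus_zero_right)

lemma plus_idem_zero:
  assumes "x \<in> Hom C a b" "Plus C x x = x"
  shows "x = Zero C a b"
  by (metis assms neg_hom plus_assoc plus_neg_right plus_zero_right)

lemma neg_zero: "a \<in> Obj C \<Longrightarrow> b \<in> Obj C \<Longrightarrow> Neg C (Zero C a b) = Zero C a b"
  by (metis neg_unique plus_zero_right zero_hom)

lemma comp_zero_left:
  assumes "f \<in> Hom C a b" "c \<in> Obj C"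
  shows "Comp C (Zero C b c) f = Zero C a c"
proof (rule plus_idem_zero)
  have "Zero C b c \<in> Hom C b c"
    using assms hom_objs zero_hom by blast
  then show "Comp C (Zero C b c) f \<in> Hom C a c"
    using assms comp_hom by blast
  show "Plus C (Comp C (Zero C b c) f) (Comp C (Zero C b c) f) = Comp C (Zero C b c) f"
    using assms \<open>Zero C b c \<in> Hom C b c\<close> by (metis comp_plus_left plus_zero_right)
qed

lemma comp_zero_right:
  assumes "g \<in> Hom C b c" "a \<in> Obj C"
  shows "Comp C g (Zero C a b) = Zero C a c"
proof (rule plus_idem_zero)
  have "Zero C a b \<in> Hom C a b"
    using assms hom_objs zero_hom by blast
  then show "Comp C g (Zero C a b) \<in> Hom C a c"
    using assms comp_hom by blast
  show "Plus C (Comp C g (Zero C a b)) (Comp C g (Zero C a b)) = Comp C g (Zero C a b)"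
    using assms \<open>Zero C a b \<in> Hom C a b\<close> by (metis comp_plus_right plus_zero_right)
qed

lemma comp_neg_left:
  assumes f: "f \<in> Hom C a b" and g: "g \<in> Hom C b c"
  shows "Comp C (Neg C g) f = Neg C (Comp C g f)"
proof (rule neg_unique)
  show "Comp C g f \<in> Hom C a c" "Comp C (Neg C g) f \<in> Hom C a c"
    using f g comp_hom neg_hom by blast+
  have "Plus C (Comp C g f) (Comp C (Neg C g) f) = Comp C (Plus C g (Neg C g)) f"
    using f g neg_hom comp_plus_left by metis
  also have "\<dots> = Zero C a c"
    using f g by (simp add: plus_neg_right comp_zero_left hom_objs)
  finally show "Plus C (Comp C g f) (Comp C (Neg C g) f) = Zero C a c" .
qed

lemma comp_neg_right:
  assumes f: "f \<in> Hom C a b" and g: "g \<in> Hom C b c"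
  shows "Comp C g (Neg C f) = Neg C (Comp C g f)"
proof (rule neg_unique)
  show "Comp C g f \<in> Hom C a c" "Comp C g (Neg C f) \<in> Hom C a c"
    using f g comp_hom neg_hom by blast+
  have "Plus C (Comp C g f) (Comp C g (Neg C f)) = Comp C g (Plus C f (Neg C f))"
    using f g neg_hom comp_plus_right by metis
  also have "\<dots> = Zero C a c"
    using f g by (simp add: plus_neg_right comp_zero_right hom_objs)
  finally show "Plus C (Comp C g f) (Comp C g (Neg C f)) = Zero C a c" .
qed

lemma comp_eq_zero_comp:
  assumes "x \<in> Hom C a b" "u \<in> Hom C b c" "\<phi> \<in> Hom C c d" "Comp C \<phi> u = Zero C b d"
  shows "Comp C \<phi> (Comp C u x) = Zero C a d"
  using assms comp_assoc comp_zero_left hom_objs by metis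

lemma comp_diff_eq_zero:
  assumes z: "z \<in> Hom C a b" and x: "x \<in> Hom C b c" and y: "y \<in> Hom C b c"
    and eq: "Comp C x z = Comp C y z"
  shows "Comp C (Plus C x (Neg C y)) z = Zero C a c"
  using comp_plus_left[OF z x neg_hom[OF y]] comp_neg_left[OF z y] eq
    plus_neg_right[OF comp_hom[OF z y]] by simp

lemma comp_plus_comp_left:
  assumes z: "z \<in> Hom C a b" and u: "u \<in> Hom C b c" and x: "x \<in> Hom C c d"
    and v: "v \<in> Hom C b c'" and y: "y \<in> Hom C c' d"
  shows "Comp C (Plus C (Comp C x u) (Comp C y v)) z =
         Plus C (Comp C x (Comp C u z)) (Comp C y (Comp C v z))"
  using comp_plus_left[OF z comp_hom[OF u x] comp_hom[OF v y]]
    comp_assoc[OF z u x] comp_assoc[OF z v y] by simp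

lemma comp_plus_comp_right:
  assumes u: "u \<in> Hom C a b" and x: "x \<in> Hom C b c"
    and v: "v \<in> Hom C a b'" and y: "y \<in> Hom C b' c" and z: "z \<in> Hom C c d"
  shows "Comp C z (Plus C (Comp C x u) (Comp C y v)) =
         Plus C (Comp C (Comp C z x) u) (Comp C (Comp C z y) v)"
  using comp_plus_right[OF comp_hom[OF u x] comp_hom[OF v y] z]
    comp_assoc[OF u x z] comp_assoc[OF v y z] by simp

lemma right_n_exact_factor:
  assumes "right_n_exact C n X u" "1 \<le> k" "k \<le> n"
    and "y \<in> Hom C (X k) D" "Comp C y (u (k - 1)) = Zero C (X (k - 1)) D"
  shows "\<exists>e \<in> Hom C (X (Suc k)) D. y = Comp C e (u k)"
proof -
  have "u (k - 1) \<in> Hom C (X (k - 1)) (X k)" "u k \<in> Hom C (X k) (X (Suc k))"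
    using right_n_exact_hom_pred[OF assms(1-3)] right_n_exact_hom[OF assms(1,3)] by auto
  moreover have "D \<in> Obj C"
    using assms(4) hom_objs by blast
  ultimately show ?thesis
    using weak_cokernel_factor[OF right_n_exact_weak_cokernel[OF assms(1-3)]] assms(4,5)
    unfolding Hom_def by auto
qed

lemma right_n_exact_epi:
  assumes ex: "right_n_exact C n X u"
    and x: "x \<in> Hom C (X (Suc n)) D" and y: "y \<in> Hom C (X (Suc n)) D"
    and eq: "Comp C x (u n) = Comp C y (u n)"
  shows "x = y"
proof -
  have n: "1 \<le> n" and ck: "cokernel C (u (n - 1)) (u n)"
    using ex unfolding right_n_exact_def by blast+
  have u': "u (n - 1) \<in> Hom C (X (n - 1)) (X n)" and u: "u n \<in> Hom C (X n) (X (Suc n))"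
    using right_n_exact_hom_pred[OF ex n order_refl] right_n_exact_hom[OF ex order_refl] by auto
  have "Comp C (Comp C x (u n)) (u (n - 1)) = Comp C x (Comp C (u n) (u (n - 1)))"
    using comp_assoc[OF u' u x] by simp
  also have "\<dots> = Zero C (X (n - 1)) D"
    using right_n_exact_comp_zero[OF ex n order_refl] comp_zero_right[OF x] u' hom_objs by auto
  finally have "Comp C (Comp C x (u n)) (u (n - 1)) = Zero C (Dom C (u (n - 1))) D"
    using u' unfolding Hom_def by simp
  moreover have "Comp C x (u n) \<in> Hom C (Cod C (u (n - 1))) D" "D \<in> Obj C"
    using u u' x comp_hom hom_objs unfolding Hom_def by auto
  ultimately have "\<exists>!e. e \<in> Hom C (Cod C (u n)) D \<and> Comp C x (u n) = Comp C e (u n)"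
    using ck unfolding cokernel_def by blast
  moreover have "Cod C (u n) = X (Suc n)"
    using u unfolding Hom_def by simp
  ultimately show ?thesis
    using x y eq by metis
qed

end

locale biproduct = additive_cat +
  fixes a b s p1 p2 i1 i2
  assumes biproduct: "is_biproduct C a b s p1 p2 i1 i2"
begin

lemma objs: "a \<in> Obj C" "b \<in> Obj C" "s \<in> Obj C"
  using biproduct hom_objs unfolding is_biproduct_def by blast+

lemma homs: "p1 \<in> Hom C s a" "p2 \<in> Hom C s b" "i1 \<in> Hom C a s" "i2 \<in> Hom C b s"
  using biproduct unfolding is_biproduct_def by blast+

lemma p1_i1: "Comp C p1 i1 = cat.Id C a"
  and p2_i2: "Comp C p2 i2 = cat.Id C b"
  and p1_i2: "Comp C p1 i2 = Zero C b a"
  and p2_i1: "Comp C p2 i1 = Zero C a b"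
  and i1p1_plus_i2p2: "Plus C (Comp C i1 p1) (Comp C i2 p2) = cat.Id C s"
  using biproduct unfolding is_biproduct_def by blast+

lemma hom_from_decomp:
  assumes "x \<in> Hom C s d"
  shows "x = Plus C (Comp C (Comp C x i1) p1) (Comp C (Comp C x i2) p2)"
  using comp_id_right[OF assms] comp_plus_comp_right[OF homs(1,3) homs(2,4) assms]
  by (simp add: i1p1_plus_i2p2)

lemma hom_from_eqI:
  "x \<in> Hom C s d \<Longrightarrow> y \<in> Hom C s d \<Longrightarrow> Comp C x i1 = Comp C y i1 \<Longrightarrow>
   Comp C x i2 = Comp C y i2 \<Longrightarrow> x = y"
  by (metis hom_from_decomp)

lemma comp_p1_i1: "x \<in> Hom C a d \<Longrightarrow> Comp C (Comp C x p1) i1 = x"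
  using comp_assoc[OF homs(3,1)] comp_id_right by (simp add: p1_i1)

lemma comp_p1_i2: "x \<in> Hom C a d \<Longrightarrow> Comp C (Comp C x p1) i2 = Zero C b d"
  using comp_assoc[OF homs(4,1)] comp_zero_right objs by (simp add: p1_i2)

lemma copair_hom:
  "x \<in> Hom C a d \<Longrightarrow> y \<in> Hom C b d \<Longrightarrow> Plus C (Comp C x p1) (Comp C y p2) \<in> Hom C s d"
  using homs by (blast intro: plus_hom comp_hom)

lemma copair_i1:
  assumes "x \<in> Hom C a d" "y \<in> Hom C b d"
  shows "Comp C (Plus C (Comp C x p1) (Comp C y p2)) i1 = x"
  using comp_plus_comp_left[OF homs(3,1) assms(1) homs(2) assms(2)] assms
  by (simp add: p1_i1 p2_i1 comp_id_right comp_zero_right objs plus_zero_right)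

lemma copair_i2:
  assumes "x \<in> Hom C a d" "y \<in> Hom C b d"
  shows "Comp C (Plus C (Comp C x p1) (Comp C y p2)) i2 = y"
  using comp_plus_comp_left[OF homs(4,1) assms(1) homs(2) assms(2)] assms
  by (simp add: p1_i2 p2_i2 comp_id_right comp_zero_right objs plus_zero_left)

end

locale mapping_cone = additive_cat C for C :: "('o, 'm, 'x) cat_scheme" +
  fixes n :: nat and A B S :: "nat \<Rightarrow> 'o" and f g h p1 p2 i1 i2 :: "nat \<Rightarrow> 'm"
  assumes top_row: "right_n_exact C n A f"
    and bottom_row: "right_n_exact C n (\<lambda>k. if k = 0 then A 0 else B k) g"
    and h_hom: "\<And>k. 1 \<le> k \<Longrightarrow> k \<le> Suc n \<Longrightarrow> h k \<in> Hom C (A k) (B k)"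
    and square0: "g 0 = Comp C (h 1) (f 0)"
    and square: "\<And>k. 1 \<le> k \<Longrightarrow> k \<le> n \<Longrightarrow> Comp C (h (Suc k)) (f k) = Comp C (g k) (h k)"
    and summands: "\<And>k. 1 \<le> k \<Longrightarrow> k \<le> n \<Longrightarrow>
      is_biproduct C (A (Suc k)) (B k) (S k) (p1 k) (p2 k) (i1 k) (i2 k)"
begin

definition bottom_obj :: "nat \<Rightarrow> 'o" where
  "bottom_obj k = (if k = 0 then A 0 else B k)"

definition cone_obj :: "nat \<Rightarrow> 'o" where
  "cone_obj k = (if k = 0 then A 1 else if k \<le> n then S k else B (Suc n))"

definition cone_toB :: "nat \<Rightarrow> 'm" where
  "cone_toB k = Plus C (Comp C (h (Suc k)) (p1 k)) (Comp C (g k) (p2 k))"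

definition cone_diff :: "nat \<Rightarrow> 'm" where
  "cone_diff k =
     (if k = 0 then Plus C (Comp C (i1 1) (Neg C (f 1))) (Comp C (i2 1) (h 1))
      else if k < n then
        Plus C (Comp C (i1 (Suc k)) (Comp C (Neg C (f (Suc k))) (p1 k))) (Comp C (i2 (Suc k)) (cone_toB k))
      else cone_toB n)"

text \<open>The components of the differential into the \<open>k\<close>-th cone term (see \<open>cone_diff_i1\<close> and
  \<open>cone_diff_i2\<close>), defined uniformly for \<open>1 \<le> k \<le> n + 1\<close> so that the last term \<open>B (n + 1)\<close>,
  which is not a biproduct, needs no separate treatment.\<close>

definition cone_inA :: "nat \<Rightarrow> 'm" where
  "cone_inA k = (if k \<le> n then Plus C (Comp C (i1 k) (Neg C (f k))) (Comp C (i2 k) (h k)) else h k)"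

definition cone_inB :: "nat \<Rightarrow> 'm" where
  "cone_inB k = (if k \<le> n then i2 k else cat.Id C (B k))"

lemma n_pos: "1 \<le> n"
  using top_row unfolding right_n_exact_def by blast

lemma right_n_exact_bottom: "right_n_exact C n bottom_obj g"
  using bottom_row unfolding bottom_obj_def[abs_def] .

lemma bottom_obj_0: "bottom_obj 0 = A 0"
  and bottom_obj_pos: "1 \<le> k \<Longrightarrow> bottom_obj k = B k"
  unfolding bottom_obj_def by simp_all

lemma A_obj: "k \<le> Suc n \<Longrightarrow> A k \<in> Obj C"
  using right_n_exact_obj[OF top_row] .

lemma f_hom: "k \<le> n \<Longrightarrow> f k \<in> Hom C (A k) (A (Suc k))"
  using right_n_exact_hom[OF top_row] .

lemma B_obj: "1 \<le> k \<Longrightarrow> k \<le> Suc n \<Longrightarrow> B k \<in> Obj C"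
  using right_n_exact_obj[OF right_n_exact_bottom, of k] by (simp add: bottom_obj_pos)

lemma g_hom: "1 \<le> k \<Longrightarrow> k \<le> n \<Longrightarrow> g k \<in> Hom C (B k) (B (Suc k))"
  using right_n_exact_hom[OF right_n_exact_bottom, of k] by (simp add: bottom_obj_pos)

lemma summand:
  "1 \<le> k \<Longrightarrow> k \<le> n \<Longrightarrow> biproduct C (A (Suc k)) (B k) (S k) (p1 k) (p2 k) (i1 k) (i2 k)"
  by unfold_locales (simp_all add: additive summands)

lemma cone_obj_0 [simp]: "cone_obj 0 = A 1"
  and cone_obj_summand: "1 \<le> k \<Longrightarrow> k \<le> n \<Longrightarrow> cone_obj k = S k"
  and cone_obj_last [simp]: "cone_obj (Suc n) = B (Suc n)"
  unfolding cone_obj_def by simp_all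

lemma cone_obj_obj: "k \<le> Suc n \<Longrightarrow> cone_obj k \<in> Obj C"
  using A_obj B_obj biproduct.objs(3)[OF summand] unfolding cone_obj_def by auto

lemma cone_inA_last [simp]: "cone_inA (Suc n) = h (Suc n)"
  and cone_inB_last [simp]: "cone_inB (Suc n) = cat.Id C (B (Suc n))"
  unfolding cone_inA_def cone_inB_def by simp_all

lemma cone_inA_hom:
  assumes k: "1 \<le> k" "k \<le> Suc n"
  shows "cone_inA k \<in> Hom C (A k) (cone_obj k)"
proof (cases "k \<le> n")
  case True
  interpret Sk: biproduct C "A (Suc k)" "B k" "S k" "p1 k" "p2 k" "i1 k" "i2 k"
    using summand k True by simp
  have "Comp C (i1 k) (Neg C (f k)) \<in> Hom C (A k) (S k)"
    using comp_hom[OF neg_hom[OF f_hom] Sk.homs(3)] True by simp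
  moreover have "Comp C (i2 k) (h k) \<in> Hom C (A k) (S k)"
    using comp_hom[OF h_hom Sk.homs(4)] k by simp
  ultimately show ?thesis
    unfolding cone_inA_def using True k cone_obj_summand plus_hom by simp
next
  case False
  then have "k = Suc n"
    using k by simp
  then show ?thesis
    using h_hom by simp
qed

lemma cone_inB_hom:
  assumes k: "1 \<le> k" "k \<le> Suc n"
  shows "cone_inB k \<in> Hom C (B k) (cone_obj k)"
proof (cases "k \<le> n")
  case True
  then show ?thesis
    using biproduct.homs(4)[OF summand] k by (simp add: cone_inB_def cone_obj_summand)
next
  case False
  then have "k = Suc n"
    using k by simp
  then show ?thesis
    using id_hom B_obj by simp
qed

lemma cone_toB_hom: "1 \<le> k \<Longrightarrow> k \<le> n \<Longrightarrow> cone_toB k \<in> Hom C (S k) (B (Suc k))"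
  unfolding cone_toB_def using biproduct.copair_hom[OF summand] h_hom g_hom by simp

lemma
  assumes "1 \<le> k" "k \<le> n"
  shows cone_toB_i1: "Comp C (cone_toB k) (i1 k) = h (Suc k)"
    and cone_toB_i2: "Comp C (cone_toB k) (i2 k) = g k"
proof -
  interpret Sk: biproduct C "A (Suc k)" "B k" "S k" "p1 k" "p2 k" "i1 k" "i2 k"
    using summand assms by simp
  have "h (Suc k) \<in> Hom C (A (Suc k)) (B (Suc k))" "g k \<in> Hom C (B k) (B (Suc k))"
    using assms h_hom g_hom by simp_all
  then show "Comp C (cone_toB k) (i1 k) = h (Suc k)" "Comp C (cone_toB k) (i2 k) = g k"
    unfolding cone_toB_def by (rule Sk.copair_i1, rule Sk.copair_i2)
qed

lemma cone_diff_0: "cone_diff 0 = cone_inA 1"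
  unfolding cone_diff_def cone_inA_def using n_pos by simp

lemma cone_diff_mid:
  "1 \<le> k \<Longrightarrow> k < n \<Longrightarrow>
   cone_diff k = Plus C (Comp C (i1 (Suc k)) (Comp C (Neg C (f (Suc k))) (p1 k)))
                        (Comp C (i2 (Suc k)) (cone_toB k))"
  unfolding cone_diff_def by simp

lemma cone_diff_last: "cone_diff n = cone_toB n"
  unfolding cone_diff_def using n_pos by simp

lemma cone_diff_hom:
  assumes "k \<le> n"
  shows "cone_diff k \<in> Hom C (cone_obj k) (cone_obj (Suc k))"
proof -
  consider "k = 0" | "1 \<le> k" "k < n" | "k = n" "1 \<le> k"
    using assms n_pos by linarith
  then show ?thesis
  proof cases
    case 1
    then show ?thesis
      using cone_inA_hom[of 1] by (simp add: cone_diff_0)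
  next
    case 2
    interpret Sk: biproduct C "A (Suc k)" "B k" "S k" "p1 k" "p2 k" "i1 k" "i2 k"
      using summand 2 by simp
    interpret Sk': biproduct C "A (Suc (Suc k))" "B (Suc k)" "S (Suc k)"
        "p1 (Suc k)" "p2 (Suc k)" "i1 (Suc k)" "i2 (Suc k)"
      using summand 2 by simp
    have "Comp C (i1 (Suc k)) (Comp C (Neg C (f (Suc k))) (p1 k)) \<in> Hom C (S k) (S (Suc k))"
      using comp_hom[OF comp_hom[OF Sk.homs(1) neg_hom[OF f_hom]] Sk'.homs(3)] 2 by simp
    moreover have "Comp C (i2 (Suc k)) (cone_toB k) \<in> Hom C (S k) (S (Suc k))"
      using comp_hom[OF cone_toB_hom Sk'.homs(4)] 2 by simp
    ultimately show ?thesis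
      using 2 plus_hom by (simp add: cone_diff_mid cone_obj_summand)
  next
    case 3
    then show ?thesis
      using cone_toB_hom by (simp add: cone_diff_last cone_obj_summand)
  qed
qed

lemma
  assumes k: "1 \<le> k" "k \<le> n"
  shows cone_diff_i1: "Comp C (cone_diff k) (i1 k) = cone_inA (Suc k)"
    and cone_diff_i2: "Comp C (cone_diff k) (i2 k) = Comp C (cone_inB (Suc k)) (g k)"
proof -
  interpret Sk: biproduct C "A (Suc k)" "B k" "S k" "p1 k" "p2 k" "i1 k" "i2 k"
    using summand k by simp
  have "Comp C (cone_diff k) (i1 k) = cone_inA (Suc k) \<and>
        Comp C (cone_diff k) (i2 k) = Comp C (cone_inB (Suc k)) (g k)"
  proof (cases "k < n")
    case True
    interpret Sk': biproduct C "A (Suc (Suc k))" "B (Suc k)" "S (Suc k)"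
        "p1 (Suc k)" "p2 (Suc k)" "i1 (Suc k)" "i2 (Suc k)"
      using summand k True by simp
    have f': "Neg C (f (Suc k)) \<in> Hom C (A (Suc k)) (A (Suc (Suc k)))"
      using neg_hom f_hom True by simp
    have toB: "cone_toB k \<in> Hom C (S k) (B (Suc k))"
      using cone_toB_hom k by simp
    have "Comp C (i1 (Suc k)) (Zero C (B k) (A (Suc (Suc k)))) = Zero C (B k) (S (Suc k))"
      using comp_zero_right[OF Sk'.homs(3) Sk.objs(2)] .
    moreover have "Comp C (i2 (Suc k)) (g k) \<in> Hom C (B k) (S (Suc k))"
      using comp_hom[OF g_hom Sk'.homs(4)] k by simp
    ultimately show ?thesis
      using comp_plus_comp_left[OF Sk.homs(3) comp_hom[OF Sk.homs(1) f'] Sk'.homs(3) toB Sk'.homs(4)]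
        comp_plus_comp_left[OF Sk.homs(4) comp_hom[OF Sk.homs(1) f'] Sk'.homs(3) toB Sk'.homs(4)]
        True k
      by (simp add: cone_diff_mid cone_toB_i1 cone_toB_i2 cone_inA_def cone_inB_def plus_zero_left
          Sk.comp_p1_i1[OF f'] Sk.comp_p1_i2[OF f'])
  next
    case False
    then have "k = n"
      using k by simp
    then show ?thesis
      using comp_id_left[OF g_hom[OF k]] k by (simp add: cone_diff_last cone_toB_i1 cone_toB_i2)
  qed
  then show "Comp C (cone_diff k) (i1 k) = cone_inA (Suc k)"
    and "Comp C (cone_diff k) (i2 k) = Comp C (cone_inB (Suc k)) (g k)"
    by simp_all
qed

lemma cone_inA_comp_f:
  assumes k: "1 \<le> k" "k \<le> n"
  shows "Comp C (cone_inA (Suc k)) (f k) = Comp C (cone_inB (Suc k)) (Comp C (g k) (h k))"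
proof (cases "Suc k \<le> n")
  case True
  interpret Sk': biproduct C "A (Suc (Suc k))" "B (Suc k)" "S (Suc k)"
      "p1 (Suc k)" "p2 (Suc k)" "i1 (Suc k)" "i2 (Suc k)"
    using summand True by simp
  have f: "f k \<in> Hom C (A k) (A (Suc k))" and f': "f (Suc k) \<in> Hom C (A (Suc k)) (A (Suc (Suc k)))"
    using f_hom k True by simp_all
  have h': "h (Suc k) \<in> Hom C (A (Suc k)) (B (Suc k))"
    using h_hom k by simp
  have "Comp C (Neg C (f (Suc k))) (f k) = Zero C (A k) (A (Suc (Suc k)))"
    using comp_neg_left[OF f f'] right_n_exact_comp_zero[OF top_row, of "Suc k"] True A_obj k
    by (simp add: neg_zero)
  moreover have "Comp C (i1 (Suc k)) (Zero C (A k) (A (Suc (Suc k)))) = Zero C (A k) (S (Suc k))"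
    using comp_zero_right[OF Sk'.homs(3)] A_obj k by simp
  moreover have "Comp C (i2 (Suc k)) (Comp C (g k) (h k)) \<in> Hom C (A k) (S (Suc k))"
    using comp_hom[OF comp_hom[OF h_hom g_hom] Sk'.homs(4)] k by simp
  ultimately show ?thesis
    using comp_plus_comp_left[OF f neg_hom[OF f'] Sk'.homs(3) h' Sk'.homs(4)] square k True
    by (simp add: cone_inA_def cone_inB_def plus_zero_left)
next
  case False
  then have "k = n"
    using k by simp
  have "Comp C (g k) (h k) \<in> Hom C (A k) (B (Suc k))"
    using comp_hom[OF h_hom g_hom] k by simp
  then show ?thesis
    using comp_id_left square[OF k] \<open>k = n\<close> by simp
qed

lemma comp_cone_inA:
  assumes k: "1 \<le> k" "k \<le> n" and \<phi>: "\<phi> \<in> Hom C (S k) D"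
  shows "Comp C \<phi> (cone_inA k) =
         Plus C (Neg C (Comp C (Comp C \<phi> (i1 k)) (f k))) (Comp C (Comp C \<phi> (i2 k)) (h k))"
proof -
  interpret Sk: biproduct C "A (Suc k)" "B k" "S k" "p1 k" "p2 k" "i1 k" "i2 k"
    using summand k by simp
  have f: "f k \<in> Hom C (A k) (A (Suc k))" and h: "h k \<in> Hom C (A k) (B k)"
    using f_hom h_hom k by simp_all
  show ?thesis
    using comp_plus_comp_right[OF neg_hom[OF f] Sk.homs(3) h Sk.homs(4) \<phi>]
      comp_neg_right[OF f comp_hom[OF Sk.homs(3) \<phi>]] k
    by (simp add: cone_inA_def)
qed

lemma cone_diff_comp_cone_inA:
  assumes k: "1 \<le> k" "k \<le> n"
  shows "Comp C (cone_diff k) (cone_inA k) = Zero C (A k) (cone_obj (Suc k))"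
proof -
  have d: "cone_diff k \<in> Hom C (S k) (cone_obj (Suc k))"
    using cone_diff_hom[OF k(2)] cone_obj_summand[OF k] by simp
  have gh: "Comp C (cone_inB (Suc k)) (Comp C (g k) (h k)) =
            Comp C (Comp C (cone_inB (Suc k)) (g k)) (h k)"
    using comp_assoc[OF h_hom g_hom cone_inB_hom] k by simp
  have "Comp C (cone_inA (Suc k)) (f k) \<in> Hom C (A k) (cone_obj (Suc k))"
    using comp_hom[OF f_hom cone_inA_hom] k by simp
  then show ?thesis
    using comp_cone_inA[OF k d] cone_inA_comp_f[OF k] gh plus_neg_left
    by (simp add: cone_diff_i1[OF k] cone_diff_i2[OF k])
qed

lemma cone_diff_comp_i2_comp_g:
  assumes j: "1 \<le> j" "j < n"
  shows "Comp C (cone_diff (Suc j)) (Comp C (i2 (Suc j)) (g j)) = Zero C (B j) (cone_obj (Suc (Suc j)))"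
proof -
  have k: "1 \<le> Suc j" "Suc j \<le> n"
    using j by simp_all
  have dk: "cone_diff (Suc j) \<in> Hom C (S (Suc j)) (cone_obj (Suc (Suc j)))"
    using cone_diff_hom[OF k(2)] cone_obj_summand[OF k] by simp
  have gj: "g j \<in> Hom C (B j) (B (Suc j))" and gk: "g (Suc j) \<in> Hom C (B (Suc j)) (B (Suc (Suc j)))"
    using g_hom j by simp_all
  have inB: "cone_inB (Suc (Suc j)) \<in> Hom C (B (Suc (Suc j))) (cone_obj (Suc (Suc j)))"
    using cone_inB_hom j by simp
  have "Comp C (cone_diff (Suc j)) (Comp C (i2 (Suc j)) (g j)) =
        Comp C (cone_inB (Suc (Suc j))) (Comp C (g (Suc j)) (g j))"
    using comp_assoc[OF gj biproduct.homs(4)[OF summand[OF k]] dk] cone_diff_i2[OF k]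
      comp_assoc[OF gj gk inB] by simp
  also have "\<dots> = Zero C (B j) (cone_obj (Suc (Suc j)))"
    using right_n_exact_comp_zero[OF right_n_exact_bottom k] comp_zero_right[OF inB] B_obj j
    by (simp add: bottom_obj_pos)
  finally show ?thesis .
qed

lemma cone_diff_comp_zero:
  assumes k: "1 \<le> k" "k \<le> n"
  shows "Comp C (cone_diff k) (cone_diff (k - 1)) = Zero C (cone_obj (k - 1)) (cone_obj (Suc k))"
  using k
proof (cases rule: one_or_Suc_cases)
  case 1
  then show ?thesis
    using cone_diff_comp_cone_inA[OF order_refl n_pos] by (simp add: cone_diff_0)
next
  case (2 j)
  interpret Sj: biproduct C "A (Suc j)" "B j" "S j" "p1 j" "p2 j" "i1 j" "i2 j"
    using summand 2 by simp
  have objs: "cone_obj j = S j" "cone_obj k = S k"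
    using cone_obj_summand 2 k by simp_all
  have dk: "cone_diff k \<in> Hom C (S k) (cone_obj (Suc k))"
    and dj: "cone_diff j \<in> Hom C (S j) (S k)"
    using cone_diff_hom[OF k(2)] cone_diff_hom[of j] 2 objs by simp_all
  have zero: "Zero C (S j) (cone_obj (Suc k)) \<in> Hom C (S j) (cone_obj (Suc k))"
    and target: "cone_obj (Suc k) \<in> Obj C"
    using zero_hom Sj.objs(3) cone_obj_obj k by simp_all
  have "Comp C (Comp C (cone_diff k) (cone_diff j)) (i1 j) = Comp C (cone_diff k) (cone_inA k)"
    using comp_assoc[OF Sj.homs(3) dj dk] cone_diff_i1 2 by simp
  then have i1: "Comp C (Comp C (cone_diff k) (cone_diff j)) (i1 j) =
                 Comp C (Zero C (S j) (cone_obj (Suc k))) (i1 j)"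
    using cone_diff_comp_cone_inA[OF k] comp_zero_left[OF Sj.homs(3) target] 2 by simp
  have "Comp C (Comp C (cone_diff k) (cone_diff j)) (i2 j) =
        Comp C (cone_diff k) (Comp C (i2 k) (g j))"
    using comp_assoc[OF Sj.homs(4) dj dk] cone_diff_i2 2 by (simp add: cone_inB_def)
  then have i2: "Comp C (Comp C (cone_diff k) (cone_diff j)) (i2 j) =
                 Comp C (Zero C (S j) (cone_obj (Suc k))) (i2 j)"
    using cone_diff_comp_i2_comp_g[OF 2(1,2)] comp_zero_left[OF Sj.homs(4) target] 2 by simp
  have "Comp C (cone_diff k) (cone_diff j) = Zero C (S j) (cone_obj (Suc k))"
    using Sj.hom_from_eqI[OF comp_hom[OF dj dk] zero i1 i2] .
  then show ?thesis
    using objs 2 by simp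
qed

lemma comp_cone_diff_eq_zero_summands:
  assumes j: "1 \<le> j" "j < n" and \<phi>: "\<phi> \<in> Hom C (S (Suc j)) D"
    and zero: "Comp C \<phi> (cone_diff j) = Zero C (S j) D"
  shows "Comp C \<phi> (cone_inA (Suc j)) = Zero C (A (Suc j)) D"
    and "Comp C (Comp C \<phi> (i2 (Suc j))) (g j) = Zero C (B j) D"
proof -
  interpret Sj: biproduct C "A (Suc j)" "B j" "S j" "p1 j" "p2 j" "i1 j" "i2 j"
    using summand j by simp
  have dj: "cone_diff j \<in> Hom C (S j) (S (Suc j))"
    using cone_diff_hom[of j] cone_obj_summand j by simp
  show "Comp C \<phi> (cone_inA (Suc j)) = Zero C (A (Suc j)) D"
    using comp_eq_zero_comp[OF Sj.homs(3) dj \<phi> zero] cone_diff_i1 j by simp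
  have "Comp C (Comp C \<phi> (i2 (Suc j))) (g j) = Comp C \<phi> (Comp C (cone_diff j) (i2 j))"
    using comp_assoc[OF g_hom biproduct.homs(4)[OF summand] \<phi>] cone_diff_i2 j
    by (simp add: cone_inB_def)
  also have "\<dots> = Zero C (B j) D"
    using comp_eq_zero_comp[OF Sj.homs(4) dj \<phi> zero] .
  finally show "Comp C (Comp C \<phi> (i2 (Suc j))) (g j) = Zero C (B j) D" .
qed

lemma comp_cone_diff_eq_zero_square:
  assumes k: "1 \<le> k" "k \<le> n" and \<phi>: "\<phi> \<in> Hom C (S k) D"
    and zero: "Comp C \<phi> (cone_diff (k - 1)) = Zero C (cone_obj (k - 1)) D"
  shows "Comp C (Comp C \<phi> (i2 k)) (h k) = Comp C (Comp C \<phi> (i1 k)) (f k)"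
proof -
  interpret Sk: biproduct C "A (Suc k)" "B k" "S k" "p1 k" "p2 k" "i1 k" "i2 k"
    using summand k by simp
  have af: "Comp C (Comp C \<phi> (i1 k)) (f k) \<in> Hom C (A k) D"
    and bh: "Comp C (Comp C \<phi> (i2 k)) (h k) \<in> Hom C (A k) D"
    using comp_hom[OF f_hom comp_hom[OF Sk.homs(3) \<phi>]] comp_hom[OF h_hom comp_hom[OF Sk.homs(4) \<phi>]] k
    by simp_all
  have "Comp C \<phi> (cone_inA k) = Zero C (A k) D"
    using k
  proof (cases rule: one_or_Suc_cases)
    case 1
    then show ?thesis
      using zero by (simp add: cone_diff_0)
  next
    case (2 j)
    then show ?thesis
      using comp_cone_diff_eq_zero_summands(1)[of j \<phi> D] \<phi> zero cone_obj_summand by simp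
  qed
  then have "Plus C (Neg C (Comp C (Comp C \<phi> (i1 k)) (f k))) (Comp C (Comp C \<phi> (i2 k)) (h k)) =
             Zero C (A k) D"
    using comp_cone_inA[OF k \<phi>] by simp
  from neg_unique[OF neg_hom[OF af] bh this]
  show ?thesis
    using neg_neg[OF af] by simp
qed

lemma comp_cone_diff_eq_zero_g:
  assumes k: "1 \<le> k" "k \<le> n" and \<phi>: "\<phi> \<in> Hom C (S k) D"
    and zero: "Comp C \<phi> (cone_diff (k - 1)) = Zero C (cone_obj (k - 1)) D"
  shows "Comp C (Comp C \<phi> (i2 k)) (g (k - 1)) = Zero C (bottom_obj (k - 1)) D"
  using k
proof (cases rule: one_or_Suc_cases)
  case 1
  interpret S1: biproduct C "A 2" "B 1" "S 1" "p1 1" "p2 1" "i1 1" "i2 1"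
    using summand n_pos by (simp add: numeral_2_eq_2)
  have a: "Comp C \<phi> (i1 1) \<in> Hom C (A 2) D" and b: "Comp C \<phi> (i2 1) \<in> Hom C (B 1) D"
    using comp_hom[OF S1.homs(3)] comp_hom[OF S1.homs(4)] \<phi> 1 by simp_all
  have f0: "f 0 \<in> Hom C (A 0) (A 1)" and f1: "f 1 \<in> Hom C (A 1) (A 2)"
    using f_hom n_pos by (simp_all add: numeral_2_eq_2)
  have "Comp C (Comp C \<phi> (i2 1)) (g 0) = Comp C (Comp C (Comp C \<phi> (i2 1)) (h 1)) (f 0)"
    using comp_assoc[OF f0 h_hom b] square0 by simp
  also have "\<dots> = Comp C (Comp C \<phi> (i1 1)) (Comp C (f 1) (f 0))"
    using comp_cone_diff_eq_zero_square[OF k \<phi> zero] comp_assoc[OF f0 f1 a] 1 by simp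
  also have "\<dots> = Zero C (A 0) D"
    using right_n_exact_comp_zero[OF top_row order_refl n_pos] comp_zero_right[OF a] A_obj
    by (simp add: numeral_2_eq_2)
  finally show ?thesis
    using 1 by (simp add: bottom_obj_0)
next
  case (2 j)
  then show ?thesis
    using comp_cone_diff_eq_zero_summands(2)[of j \<phi> D] \<phi> zero cone_obj_summand
    by (simp add: bottom_obj_pos)
qed

lemma cone_extend_summand:
  assumes j: "1 \<le> j" "j \<le> n" and a: "a \<in> Hom C (A j) D" and e: "e \<in> Hom C (B j) D"
    and vanish: "Comp C (Plus C a (Neg C (Comp C e (h j)))) (f (j - 1)) = Zero C (A (j - 1)) D"
  obtains \<psi> where "\<psi> \<in> Hom C (S j) D" and "Comp C \<psi> (cone_inA j) = a" and "Comp C \<psi> (i2 j) = e"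
proof -
  interpret Sj: biproduct C "A (Suc j)" "B j" "S j" "p1 j" "p2 j" "i1 j" "i2 j"
    using summand j by simp
  have eh: "Comp C e (h j) \<in> Hom C (A j) D"
    using comp_hom[OF h_hom e] j by simp
  obtain c where c: "c \<in> Hom C (A (Suc j)) D" "Plus C a (Neg C (Comp C e (h j))) = Comp C c (f j)"
    using right_n_exact_factor[OF top_row j plus_hom[OF a neg_hom[OF eh]] vanish] by blast
  define \<psi> where "\<psi> = Plus C (Comp C (Neg C c) (p1 j)) (Comp C e (p2 j))"
  have \<psi>: "\<psi> \<in> Hom C (S j) D"
    unfolding \<psi>_def using Sj.copair_hom[OF neg_hom[OF c(1)] e] .
  have \<psi>_i: "Comp C \<psi> (i1 j) = Neg C c" "Comp C \<psi> (i2 j) = e"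
    unfolding \<psi>_def using Sj.copair_i1 Sj.copair_i2 neg_hom[OF c(1)] e by simp_all
  have "Comp C \<psi> (cone_inA j) = Plus C (Plus C a (Neg C (Comp C e (h j)))) (Comp C e (h j))"
    using comp_cone_inA[OF j \<psi>] \<psi>_i comp_neg_left[OF f_hom c(1)] neg_neg[OF comp_hom[OF f_hom c(1)]]
      c(2) j by simp
  also have "\<dots> = a"
    using plus_neg_cancel[OF a eh] .
  finally show ?thesis
    using that \<psi> \<psi>_i by simp
qed

lemma cone_extend:
  assumes k: "1 \<le> k" "k \<le> n"
    and a: "a \<in> Hom C (A (Suc k)) D" and e: "e \<in> Hom C (B (Suc k)) D"
    and eq: "Comp C a (f k) = Comp C e (Comp C (g k) (h k))"
  obtains \<psi> where "\<psi> \<in> Hom C (cone_obj (Suc k)) D"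
    and "Comp C \<psi> (cone_inA (Suc k)) = a" and "Comp C \<psi> (cone_inB (Suc k)) = e"
proof -
  have f: "f k \<in> Hom C (A k) (A (Suc k))" and h': "h (Suc k) \<in> Hom C (A (Suc k)) (B (Suc k))"
    using f_hom h_hom k by simp_all
  have eh': "Comp C e (h (Suc k)) \<in> Hom C (A (Suc k)) D"
    using comp_hom[OF h' e] .
  have eq': "Comp C a (f k) = Comp C (Comp C e (h (Suc k))) (f k)"
    using eq comp_assoc[OF f h' e] square[OF k] by simp
  show ?thesis
  proof (cases "Suc k \<le> n")
    case True
    then obtain \<psi> where "\<psi> \<in> Hom C (S (Suc k)) D"
      and "Comp C \<psi> (cone_inA (Suc k)) = a" and "Comp C \<psi> (i2 (Suc k)) = e"
      using cone_extend_summand[of "Suc k" a D e] comp_diff_eq_zero[OF f a eh' eq'] a e by auto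
    then show ?thesis
      using that True by (simp add: cone_obj_summand cone_inB_def)
  next
    case False
    then have "k = n"
      using k by simp
    then have "a = Comp C e (h (Suc k))"
      using right_n_exact_epi[OF top_row, of a D "Comp C e (h (Suc k))"] a eh' eq' by simp
    then show ?thesis
      using that e comp_id_right[OF e] \<open>k = n\<close> by simp
  qed
qed

lemma cone_diff_factor:
  assumes k: "1 \<le> k" "k \<le> n" and \<phi>: "\<phi> \<in> Hom C (cone_obj k) D"
    and zero: "Comp C \<phi> (cone_diff (k - 1)) = Zero C (cone_obj (k - 1)) D"
  shows "\<exists>\<psi> \<in> Hom C (cone_obj (Suc k)) D. \<phi> = Comp C \<psi> (cone_diff k)"
proof -
  interpret Sk: biproduct C "A (Suc k)" "B k" "S k" "p1 k" "p2 k" "i1 k" "i2 k"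
    using summand k by simp
  have \<phi>': "\<phi> \<in> Hom C (S k) D"
    using \<phi> cone_obj_summand[OF k] by simp
  define a where "a = Comp C \<phi> (i1 k)"
  define b where "b = Comp C \<phi> (i2 k)"
  have a: "a \<in> Hom C (A (Suc k)) D" and b: "b \<in> Hom C (B k) D"
    unfolding a_def b_def using comp_hom[OF Sk.homs(3) \<phi>'] comp_hom[OF Sk.homs(4) \<phi>'] .
  have bh: "Comp C b (h k) = Comp C a (f k)"
    and bg: "Comp C b (g (k - 1)) = Zero C (bottom_obj (k - 1)) D"
    unfolding a_def b_def
    using comp_cone_diff_eq_zero_square[OF k \<phi>' zero] comp_cone_diff_eq_zero_g[OF k \<phi>' zero] .
  obtain e where e: "e \<in> Hom C (B (Suc k)) D" "b = Comp C e (g k)"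
    using right_n_exact_factor[OF right_n_exact_bottom k _ bg] b k by (auto simp: bottom_obj_pos)
  have "Comp C a (f k) = Comp C e (Comp C (g k) (h k))"
    using bh e comp_assoc[OF h_hom g_hom e(1)] k by simp
  then obtain \<psi> where \<psi>: "\<psi> \<in> Hom C (cone_obj (Suc k)) D"
    and \<psi>_inA: "Comp C \<psi> (cone_inA (Suc k)) = a" and \<psi>_inB: "Comp C \<psi> (cone_inB (Suc k)) = e"
    using cone_extend[OF k a e(1)] by blast
  have d: "cone_diff k \<in> Hom C (S k) (cone_obj (Suc k))"
    using cone_diff_hom[OF k(2)] cone_obj_summand[OF k] by simp
  have "\<phi> = Comp C \<psi> (cone_diff k)"
  proof (rule Sk.hom_from_eqI[OF \<phi>' comp_hom[OF d \<psi>]])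
    show "Comp C \<phi> (i1 k) = Comp C (Comp C \<psi> (cone_diff k)) (i1 k)"
      using comp_assoc[OF Sk.homs(3) d \<psi>] cone_diff_i1[OF k] \<psi>_inA a_def by simp
    show "Comp C \<phi> (i2 k) = Comp C (Comp C \<psi> (cone_diff k)) (i2 k)"
      using comp_assoc[OF Sk.homs(4) d \<psi>] cone_diff_i2[OF k] comp_assoc[OF g_hom cone_inB_hom \<psi>]
        \<psi>_inB e b_def k by simp
  qed
  then show ?thesis
    using \<psi> by blast
qed

lemma cone_diff_weak_cokernel:
  assumes k: "1 \<le> k" "k \<le> n"
  shows "weak_cokernel C (cone_diff (k - 1)) (cone_diff k)"
proof -
  have d': "cone_diff (k - 1) \<in> Hom C (cone_obj (k - 1)) (cone_obj k)"
    using cone_diff_hom[of "k - 1"] k by simp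
  have d: "cone_diff k \<in> Hom C (cone_obj k) (cone_obj (Suc k))"
    using cone_diff_hom k by simp
  have dom_cod: "Dom C (cone_diff (k - 1)) = cone_obj (k - 1)" "Cod C (cone_diff (k - 1)) = cone_obj k"
    "Dom C (cone_diff k) = cone_obj k" "Cod C (cone_diff k) = cone_obj (Suc k)"
    using d d' unfolding Hom_def by simp_all
  show ?thesis
    unfolding weak_cokernel_def dom_cod
  proof (intro conjI ballI impI)
    show "cone_diff (k - 1) \<in> Mor C" "cone_diff k \<in> Mor C"
      using d d' unfolding Hom_def by simp_all
    show "Comp C (cone_diff k) (cone_diff (k - 1)) = Zero C (cone_obj (k - 1)) (cone_obj (Suc k))"
      using cone_diff_comp_zero[OF k] .
    show "\<exists>\<psi> \<in> Hom C (cone_obj (Suc k)) D. \<phi> = Comp C \<psi> (cone_diff k)"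
      if "\<phi> \<in> Hom C (cone_obj k) D"
        and "Comp C \<phi> (cone_diff (k - 1)) = Zero C (cone_obj (k - 1)) D" for D \<phi>
      using cone_diff_factor[OF k that] .
  qed (rule refl)
qed

lemma cone_diff_epi:
  assumes x: "x \<in> Hom C (cone_obj (Suc n)) D" and y: "y \<in> Hom C (cone_obj (Suc n)) D"
    and eq: "Comp C x (cone_diff n) = Comp C y (cone_diff n)"
  shows "x = y"
proof -
  interpret Sn: biproduct C "A (Suc n)" "B n" "S n" "p1 n" "p2 n" "i1 n" "i2 n"
    using summand n_pos by simp
  have d: "cone_diff n \<in> Hom C (S n) (B (Suc n))"
    using cone_diff_hom[of n] cone_obj_summand[OF n_pos order_refl] by simp
  have g: "Comp C (cone_diff n) (i2 n) = g n"
    using cone_diff_i2[OF n_pos order_refl] comp_id_left[OF g_hom[OF n_pos order_refl]] by simp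
  have "Comp C x (g n) = Comp C y (g n)"
    using comp_assoc[OF Sn.homs(4) d] x y eq g by (metis cone_obj_last)
  then show ?thesis
    using right_n_exact_epi[OF right_n_exact_bottom] x y by (simp add: bottom_obj_pos)
qed

theorem right_n_exact_cone: "right_n_exact C n cone_obj cone_diff"
  using n_pos cone_obj_obj cone_diff_hom cone_diff_weak_cokernel cone_diff_epi
  by (rule right_n_exactI)

end

theorem lemma2p7:
  fixes C :: "('o, 'm, 'x) cat_scheme"
    and n :: nat
    and A B S :: "nat \<Rightarrow> 'o"
    and f g h p1 p2 i1 i2 :: "nat \<Rightarrow> 'm"
  assumes add: "additive_category C"
    and n: "1 \<le> n"
    and top: "right_n_exact C n A f"
    and bot: "right_n_exact C n (\<lambda>k. if k = 0 then A 0 else B k) g"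
    and h_hom: "\<And>k. 1 \<le> k \<Longrightarrow> k \<le> Suc n \<Longrightarrow> h k \<in> Hom C (A k) (B k)"
    and sq0: "g 0 = Comp C (h 1) (f 0)"
    and sq: "\<And>i. 1 \<le> i \<Longrightarrow> i \<le> n \<Longrightarrow> Comp C (h (Suc i)) (f i) = Comp C (g i) (h i)"
    and bip: "\<And>i. 1 \<le> i \<Longrightarrow> i \<le> n \<Longrightarrow>
                 is_biproduct C (A (Suc i)) (B i) (S i) (p1 i) (p2 i) (i1 i) (i2 i)"
  shows "right_n_exact C n
           (\<lambda>k. if k = 0 then A 1 else if k \<le> n then S k else B (Suc n))
           (\<lambda>k. if k = 0 then
                   Plus C (Comp C (i1 1) (Neg C (f 1))) (Comp C (i2 1) (h 1))
                 else if k < n then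
                   Plus C (Comp C (i1 (Suc k)) (Comp C (Neg C (f (Suc k))) (p1 k)))
                          (Comp C (i2 (Suc k))
                             (Plus C (Comp C (h (Suc k)) (p1 k)) (Comp C (g k) (p2 k))))
                 else
                   Plus C (Comp C (h (Suc n)) (p1 n)) (Comp C (g n) (p2 n)))"
proof -
  interpret mapping_cone C n A B S f g h p1 p2 i1 i2
    by unfold_locales (fact add top bot sq0 h_hom sq bip)+
  show ?thesis
    using right_n_exact_cone unfolding cone_obj_def[abs_def] cone_diff_def[abs_def] cone_toB_def .
qed

end
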